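(* Let $\mathcal{X}$ be a finite set, $P_X$ a probability distribution on $\mathcal{X}$, $X\sim P_X$, and $\rho\ge1$. For a probability distribution $\hat P$ on $\mathcal{X}$, let $\hat X_1,\hat X_2,\dots$ be i.i.d. with law $\hat P$, independent of $X$, let $G(X,\hat X_1^\infty)=\inf\{k\ge1:\hat X_k=X\}$ and $$V_\rho(X,\hat X_1^\infty)=\binom{G(X,\hat X_1^\infty)+\rho-1}{\rho}.$$ Define $\mathbb{E}\{V^*_\rho(X,\hat X_1^\infty)\}=\inf_{\hat P}\mathbb{E}\{V_\rho(X,\hat X_1^\infty)\}$, the infimum over the probability simplex on $\mathcal{X}$. Then $$\log\mathbb{E}\{V^*_\rho(X,\hat X_1^\infty)\}=\rho\, H_{\frac{1}{1+\rho}}(X),$$ and the minimizer $\hat P^*_\rho$ is given, for every $x\in\mathcal{X}$, by $$\hat P^*_\rho(x)=\frac{P_X(x)^{\frac{1}{1+\rho}}}{\sum_{x'\in\mathcal{X}}P_X(x')^{\frac{1}{1+\rho}}}.$$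
   Context: The generalized binomial coefficient is $\binom{x}{y}=\frac{\Gamma(x+1)}{\Gamma(y+1)\Gamma(x-y+1)}$. Logarithms are natural. For $\alpha>0,\alpha\ne1$, $H_\alpha(X)=\frac{1}{1-\alpha}\log\sum_{x\in\mathcal{X}}P_X(x)^\alpha$. The expectation is over $X$ and the guesses. *)

theory Defs
  imports "HOL-Probability.Probability"
begin

definition gbinom :: "real \<Rightarrow> real \<Rightarrow> real" where
  "gbinom x y = Gamma (x + 1) / (Gamma (y + 1) * Gamma (x - y + 1))"

definition renyi_entropy :: "real \<Rightarrow> 'a::finite pmf \<Rightarrow> real" where
  "renyi_entropy \<alpha> P = 1 / (1 - \<alpha>) * ln (\<Sum>x\<in>UNIV. pmf P x powr \<alpha>)"

text \<open>Guessing time G = inf {k >= 1. Xhat_k = x}; the guesses are the stream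
  (Xhat_1 = w !! 0, Xhat_2 = w !! 1, ...); inf of the empty set is infinity.\<close>
definition guess_time :: "'a \<Rightarrow> 'a stream \<Rightarrow> enat" where
  "guess_time x w = (if \<exists>k. w !! k = x then enat (Suc (LEAST k. w !! k = x)) else \<infinity>)"

definition V_rho :: "real \<Rightarrow> 'a \<Rightarrow> 'a stream \<Rightarrow> ennreal" where
  "V_rho \<rho> x w = (case guess_time x w of
      enat k \<Rightarrow> ennreal (gbinom (real k + \<rho> - 1) \<rho>)
    | \<infinity> \<Rightarrow> \<infinity>)"

definition expected_V :: "real \<Rightarrow> 'a pmf \<Rightarrow> 'a pmf \<Rightarrow> ennreal" where
  "expected_V \<rho> P Q =
     (\<integral>\<^sup>+ z. V_rho \<rho> (fst z) (snd z) \<partial>(measure_pmf P \<Otimes>\<^sub>M stream_space (measure_pmf Q)))"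

definition opt_expected_V :: "real \<Rightarrow> 'a pmf \<Rightarrow> ennreal" where
  "opt_expected_V \<rho> P = (INF Q. expected_V \<rho> P Q)"

end

theory Submission
  imports Defs
begin

text \<open>
  For a fixed guessing distribution Q, the first time an i.i.d. Q-stream hits x is geometric
  with success probability Q x, and by the negative binomial series the expectation of
  binom(G + \<rho> - 1, \<rho>) is Q x powr -\<rho> (and \<infinity> if Q x = 0). Hence the expected cost is
  \<Sum>x. P x * Q x powr -\<rho>. Writing P x = S powr (1 + \<rho>) * R x powr (1 + \<rho>), where
  S = \<Sum>x. P x powr (1 / (1 + \<rho>)) and R is the escort distribution proportional to
  P powr (1 / (1 + \<rho>)), the cost becomes S powr (1 + \<rho>) * \<Sum>x. R x powr (1 + \<rho>) * Q x powr -\<rho>.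
  The last sum is at least 1, with equality iff Q = R, by summing the tangent-line inequality
  s powr p * q powr (1 - p) \<ge> p * s - (p - 1) * q of the strictly convex map t \<mapsto> t powr p.
  Finally ln (S powr (1 + \<rho>)) = \<rho> * H_{1/(1+\<rho>)}(P).
\<close>

lemma gbinom_eq_gbinomial:
  assumes "-1 < \<rho>"
  shows "gbinom (real k + \<rho>) \<rho> = (real k + \<rho>) gchoose k"
proof -
  have "\<rho> + 1 \<notin> \<int>\<^sub>\<le>\<^sub>0"
    using assms nonpos_Ints_nonpos by fastforce
  then have "pochhammer (\<rho> + 1) k = Gamma (\<rho> + 1 + real k) / Gamma (\<rho> + 1)"
    by (rule pochhammer_Gamma)
  then show ?thesis
    by (simp add: gbinom_def gbinomial_pochhammer' Gamma_fact algebra_simps)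
qed

lemma gbinomial_shift_nonneg:
  fixes \<rho> :: real
  assumes "-1 < \<rho>"
  shows "0 \<le> (real k + \<rho>) gchoose k"
  using assms by (simp add: gbinomial_pochhammer' pochhammer_nonneg)

lemma sums_gbinomial_geometric:
  fixes \<rho> q :: real
  assumes "0 < q" "q \<le> 1"
  shows "(\<lambda>k. ((real k + \<rho>) gchoose k) * ((1 - q)^k * q)) sums (q powr -\<rho>)"
proof -
  have binomial: "(\<lambda>k. ((-(\<rho> + 1)) gchoose k) * (q - 1)^k) sums (q powr (-(\<rho> + 1)))"
    using gen_binomial_real[of "q - 1" "-(\<rho> + 1)"] assms by simp
  have "((-(\<rho> + 1)) gchoose k) * (q - 1)^k * q = ((real k + \<rho>) gchoose k) * ((1 - q)^k * q)" for k
  proof -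
    have "(-(\<rho> + 1)) gchoose k = (-1)^k * ((real k + \<rho>) gchoose k)"
      using gbinomial_negated_upper[of "-(\<rho> + 1)" k] by simp
    moreover have "(q - 1)^k = (-1)^k * (1 - q)^k"
      by (metis minus_diff_eq power_minus)
    ultimately show ?thesis
      by (simp flip: power_mult_distrib)
  qed
  moreover have "q powr (-(\<rho> + 1)) * q = q powr -\<rho>"
    using assms powr_add[of q "-(\<rho> + 1)" 1] by simp
  ultimately show ?thesis
    using sums_mult2[OF binomial, of q] by (simp only:)
qed

lemma guess_time_Cons:
  "guess_time x (y ## w) = (if y = x then 1 else eSuc (guess_time x w))"
proof (cases "y = x")
  case True
  then have first: "(y ## w) !! 0 = x" by simp
  then have "\<exists>k. (y ## w) !! k = x" ..
  with first show ?thesis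
    using Least_eq_0[of "\<lambda>k. (y ## w) !! k = x"] True by (auto simp: guess_time_def one_enat_def)
next
  case False
  have ex: "(\<exists>k. (y ## w) !! k = x) \<longleftrightarrow> (\<exists>k. w !! k = x)"
  proof
    assume "\<exists>k. (y ## w) !! k = x"
    then obtain k where "(y ## w) !! k = x" ..
    with False show "\<exists>k. w !! k = x" by (cases k) auto
  next
    assume "\<exists>k. w !! k = x"
    then obtain k where "w !! k = x" ..
    then have "(y ## w) !! Suc k = x" by simp
    then show "\<exists>k. (y ## w) !! k = x" ..
  qed
  have "(LEAST k. (y ## w) !! k = x) = Suc (LEAST k. w !! k = x)" if "w !! k = x" for k
    using Least_Suc[of "\<lambda>k. (y ## w) !! k = x" "Suc k"] that False by simp
  then show ?thesis
    using False ex by (auto simp: guess_time_def eSuc_enat)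
qed

lemma guess_time_neq_0: "guess_time x w \<noteq> 0"
  by (simp add: guess_time_def zero_enat_def)

lemma pred_snth_eq[measurable]:
  "Measurable.pred (stream_space (measure_pmf Q)) (\<lambda>w. w !! k = x)"
proof -
  have "(\<lambda>w. w !! k) \<in> measurable (stream_space (measure_pmf Q)) (count_space UNIV)"
    using measurable_snth[of k "measure_pmf Q"] by (simp cong: measurable_cong_sets)
  then show ?thesis by (rule measurable_compose) simp
qed

lemma measurable_guess_time[measurable]:
  "guess_time x \<in> measurable (stream_space (measure_pmf Q)) (count_space UNIV)"
  unfolding guess_time_def by measurable

lemma sets_guess_time_eq[measurable]:
  "{w. guess_time x w = t} \<in> sets (stream_space (measure_pmf Q))"
  using measurable_sets[OF measurable_guess_time, of "{t}" x Q]
  by (simp add: space_stream_space vimage_def)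

lemma prob_space_stream_space_pmf: "prob_space (stream_space (measure_pmf Q))"
  by (rule prob_space.prob_space_stream_space[OF prob_space_measure_pmf])

lemma emeasure_stream_space_pmf:
  assumes "A \<in> sets (stream_space (measure_pmf Q))"
  shows "emeasure (stream_space (measure_pmf Q)) A
    = (\<integral>\<^sup>+y. emeasure (stream_space (measure_pmf Q)) {w. y ## w \<in> A} \<partial>measure_pmf Q)"
  using prob_space.emeasure_stream_space[OF prob_space_measure_pmf assms]
  by (simp add: space_stream_space)

lemma emeasure_guess_time_eq_Suc:
  "emeasure (stream_space (measure_pmf Q)) {w. guess_time x w = enat (Suc k)}
     = ennreal ((1 - pmf Q x)^k * pmf Q x)"
proof (induction k)
  case 0
  have "emeasure (stream_space (measure_pmf Q)) {w. guess_time x (y ## w) = enat (Suc 0)}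
      = indicator {x} y" for y
  proof -
    have "{w. guess_time x (y ## w) = enat (Suc 0)} = (if y = x then UNIV else {})"
      using guess_time_neq_0[of x]
      by (auto simp: guess_time_Cons one_enat_def eSuc_enat_iff zero_enat_def)
    then show ?thesis
      using prob_space.emeasure_space_1[OF prob_space_stream_space_pmf[of Q]]
      by (simp add: space_stream_space)
  qed
  then show ?case
    by (subst emeasure_stream_space_pmf) (simp_all add: emeasure_pmf_single)
next
  case (Suc k)
  have "{w. guess_time x (y ## w) = enat (Suc (Suc k))}
      = (if y = x then {} else {w. guess_time x w = enat (Suc k)})" for y
    by (auto simp: guess_time_Cons one_enat_def eSuc_enat_iff)
  then have "emeasure (stream_space (measure_pmf Q)) {w. guess_time x w = enat (Suc (Suc k))}
      = (\<integral>\<^sup>+y. ennreal ((1 - pmf Q x)^k * pmf Q x) * indicator (UNIV - {x}) y \<partial>measure_pmf Q)"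
    by (subst emeasure_stream_space_pmf) (auto simp: Suc.IH intro!: nn_integral_cong split: split_indicator)
  also have "\<dots> = ennreal ((1 - pmf Q x)^k * pmf Q x) * ennreal (1 - pmf Q x)"
    using measure_pmf.prob_compl[of "{x}" Q]
    by (simp add: nn_integral_cmult_indicator measure_pmf.emeasure_eq_measure measure_pmf_single)
  finally show ?case
    by (simp add: ennreal_mult[symmetric] pmf_le_1)
qed

lemma emeasure_guess_time_infinity:
  "emeasure (stream_space (measure_pmf Q)) {w. guess_time x w = \<infinity>}
     = (if pmf Q x > 0 then 0 else 1)"
proof -
  interpret S: prob_space "stream_space (measure_pmf Q)"
    by (rule prob_space_stream_space_pmf)
  let ?A = "\<lambda>k. {w. guess_time x w = enat (Suc k)}"
  have "guess_time x w = \<infinity> \<longleftrightarrow> (\<forall>k. guess_time x w \<noteq> enat (Suc k))" for w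
    using guess_time_neq_0[of x w] not0_implies_Suc
    by (cases "guess_time x w") (auto simp: zero_enat_def)
  then have compl: "{w. guess_time x w = \<infinity>} = space (stream_space (measure_pmf Q)) - (\<Union>k. ?A k)"
    by (auto simp: space_stream_space)
  have geometric: "(\<lambda>k. (1 - pmf Q x)^k * pmf Q x) sums (if pmf Q x > 0 then 1 else 0)"
  proof (cases "pmf Q x > 0")
    case True
    then have "norm (1 - pmf Q x) < 1" using pmf_le_1[of Q x] by auto
    from sums_mult2[OF geometric_sums[OF this], of "pmf Q x"] True show ?thesis by simp
  next
    case False
    then have "pmf Q x = 0" using pmf_nonneg[of Q x] by linarith
    then show ?thesis by simp
  qed
  have "emeasure (stream_space (measure_pmf Q)) (\<Union>k. ?A k) = (\<Sum>k. ennreal ((1 - pmf Q x)^k * pmf Q x))"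
    by (subst suminf_emeasure[symmetric])
       (auto simp: disjoint_family_on_def emeasure_guess_time_eq_Suc)
  also have "\<dots> = ennreal (if pmf Q x > 0 then 1 else 0)"
    using geometric pmf_le_1[of Q x] by (intro suminf_ennreal_eq) auto
  finally show ?thesis
    unfolding compl by (subst emeasure_compl) (auto simp: S.emeasure_space_1)
qed

lemma V_rho_eq_suminf:
  assumes "-1 < \<rho>"
  shows "V_rho \<rho> x w = (\<Sum>k. ennreal ((real k + \<rho>) gchoose k) * indicator {w. guess_time x w = enat (Suc k)} w)
     + \<infinity> * indicator {w. guess_time x w = \<infinity>} w"
proof (cases "guess_time x w")
  case (enat n)
  with guess_time_neq_0[of x w] obtain m where m: "n = Suc m"
    by (auto simp: zero_enat_def gr0_conv_Suc)
  have "(\<lambda>k. ennreal ((real k + \<rho>) gchoose k) * indicator {w. guess_time x w = enat (Suc k)} w)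
      = (\<lambda>k. if k = m then ennreal ((real k + \<rho>) gchoose k) else 0)"
    using enat m by (auto simp: fun_eq_iff)
  then show ?thesis
    using enat m assms sums_unique[OF sums_single[of m "\<lambda>k. ennreal ((real k + \<rho>) gchoose k)"]]
    by (simp add: V_rho_def gbinom_eq_gbinomial)
qed (simp add: V_rho_def)

lemma nn_integral_V_rho:
  assumes "-1 < \<rho>"
  shows "(\<integral>\<^sup>+w. V_rho \<rho> x w \<partial>stream_space (measure_pmf Q))
    = (if pmf Q x > 0 then ennreal (pmf Q x powr -\<rho>) else \<infinity>)"
proof -
  let ?c = "\<lambda>k. (real k + \<rho>) gchoose k" and ?q = "pmf Q x"
  have "(\<integral>\<^sup>+w. V_rho \<rho> x w \<partial>stream_space (measure_pmf Q))
      = (\<Sum>k. ennreal (?c k) * ennreal ((1 - ?q)^k * ?q)) + \<infinity> * (if ?q > 0 then 0 else 1)"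
    by (simp add: V_rho_eq_suminf[OF assms] nn_integral_add nn_integral_suminf
        nn_integral_cmult_indicator emeasure_guess_time_eq_Suc emeasure_guess_time_infinity)
  moreover have "(\<Sum>k. ennreal (?c k) * ennreal ((1 - ?q)^k * ?q)) = ennreal (?q powr -\<rho>)" if "?q > 0"
    using sums_gbinomial_geometric[OF that pmf_le_1] gbinomial_shift_nonneg[OF assms] pmf_le_1[of Q x]
    by (simp add: ennreal_mult[symmetric] suminf_ennreal2 sums_unique[symmetric])
  ultimately show ?thesis by simp
qed

lemma measurable_V_rho:
  fixes P :: "'a::countable pmf"
  shows "(\<lambda>z. V_rho \<rho> (fst z) (snd z))
    \<in> borel_measurable (measure_pmf P \<Otimes>\<^sub>M stream_space (measure_pmf Q))"
proof -
  have "V_rho \<rho> x \<in> borel_measurable (stream_space (measure_pmf Q))" for x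
    unfolding V_rho_def by measurable
  then have "(\<lambda>z. V_rho \<rho> (fst z) (snd z))
      \<in> borel_measurable (count_space UNIV \<Otimes>\<^sub>M stream_space (measure_pmf Q))"
    by (intro measurable_pair_measure_countable1) simp_all
  then show ?thesis
    by (subst measurable_cong_sets[OF sets_pair_measure_cong refl])
       (simp_all add: sets_measure_pmf_count_space)
qed

lemma expected_V_eq_sum:
  fixes P Q :: "'a::finite pmf"
  assumes "-1 < \<rho>"
  shows "expected_V \<rho> P Q
    = (\<Sum>x\<in>UNIV. ennreal (pmf P x) * (if pmf Q x > 0 then ennreal (pmf Q x powr -\<rho>) else \<infinity>))"
proof -
  interpret S: prob_space "stream_space (measure_pmf Q)"
    by (rule prob_space_stream_space_pmf)
  have "expected_V \<rho> P Q = (\<integral>\<^sup>+x. \<integral>\<^sup>+w. V_rho \<rho> x w \<partial>stream_space (measure_pmf Q) \<partial>measure_pmf P)"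
    unfolding expected_V_def using S.nn_integral_fst[OF measurable_V_rho] by simp
  then show ?thesis
    by (simp add: nn_integral_V_rho[OF assms] nn_integral_measure_pmf nn_integral_count_space_finite mult.commute)
qed

lemma Bernoulli_inequality_powr_strict:
  fixes p t :: real
  assumes "1 < p" "0 < t" "t \<noteq> 1"
  shows "1 + p * (t - 1) < t powr p"
proof -
  let ?f = "\<lambda>t. t powr p - p * t" and ?f' = "\<lambda>z. p * z powr (p - 1) - p"
  have deriv: "(?f has_real_derivative ?f' z) (at z)" if "0 < z" for z
    using that \<open>1 < p\<close> by (auto intro!: derivative_eq_intros)
  show ?thesis
  proof (cases "1 < t")
    case True
    obtain z where z: "1 < z" "z < t" "?f t - ?f 1 = (t - 1) * ?f' z"
      using MVT2[OF True deriv] by auto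
    have "1 < z powr (p - 1)" using z \<open>1 < p\<close> by simp
    then have "0 < (t - 1) * ?f' z" using True \<open>1 < p\<close> by simp
    then show ?thesis using z(3) by (simp add: algebra_simps)
  next
    case False
    with assms have "t < 1" by simp
    obtain z where z: "t < z" "z < 1" "?f 1 - ?f t = (1 - t) * ?f' z"
      using MVT2[OF \<open>t < 1\<close> deriv] \<open>0 < t\<close> by auto
    have "z powr (p - 1) < 1 powr (p - 1)"
      using z \<open>0 < t\<close> \<open>1 < p\<close> by (intro powr_less_mono2) auto
    then have "(1 - t) * ?f' z < 0" using \<open>t < 1\<close> \<open>1 < p\<close> by (simp add: mult_pos_neg)
    then show ?thesis using z(3) by (simp add: algebra_simps)
  qed
qed

lemma powr_mult_powr_one_minus_ge_linear:
  fixes p s q :: real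
  assumes "1 < p" "0 \<le> s" "0 \<le> q" "0 < s \<Longrightarrow> 0 < q"
  shows "p * s - (p - 1) * q \<le> s powr p * q powr (1 - p)"
    and "s powr p * q powr (1 - p) = p * s - (p - 1) * q \<longleftrightarrow> s = q"
proof -
  have "s = q \<and> s powr p * q powr (1 - p) = p * s - (p - 1) * q
      \<or> s \<noteq> q \<and> p * s - (p - 1) * q < s powr p * q powr (1 - p)"
  proof (cases "s = 0")
    case True
    then show ?thesis using assms by auto
  next
    case False
    with assms have "0 < s" "0 < q" by auto
    define t where "t = s / q"
    have "0 < t" "s = t * q" using \<open>0 < s\<close> \<open>0 < q\<close> by (auto simp: t_def)
    have "s powr p * q powr (1 - p) = q * t powr p"
      using \<open>0 < t\<close> \<open>0 < q\<close> by (simp add: \<open>s = t * q\<close> powr_mult powr_diff field_simps)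
    moreover have "p * s - (p - 1) * q = q * (1 + p * (t - 1))"
      by (simp add: \<open>s = t * q\<close> algebra_simps)
    moreover have "1 + p * (t - 1) < t powr p" if "t \<noteq> 1"
      using Bernoulli_inequality_powr_strict[OF \<open>1 < p\<close> \<open>0 < t\<close> that] .
    ultimately show ?thesis
      using \<open>0 < q\<close> \<open>s = t * q\<close> by (cases "t = 1") auto
  qed
  then show "p * s - (p - 1) * q \<le> s powr p * q powr (1 - p)"
    and "s powr p * q powr (1 - p) = p * s - (p - 1) * q \<longleftrightarrow> s = q"
    by auto
qed

text \<open>\<open>renyi_sum p R Q\<close> is exp ((p - 1) * D_p(R || Q)), D_p the Renyi divergence of order p.\<close>

definition renyi_sum :: "real \<Rightarrow> 'a::finite pmf \<Rightarrow> 'a pmf \<Rightarrow> real" where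
  "renyi_sum p R Q = (\<Sum>x\<in>UNIV. pmf R x powr p * pmf Q x powr (1 - p))"

lemma renyi_sum_ge_1:
  fixes R Q :: "'a::finite pmf"
  assumes "1 < p" and supp: "\<And>x. 0 < pmf R x \<Longrightarrow> 0 < pmf Q x"
  shows "1 \<le> renyi_sum p R Q"
    and "renyi_sum p R Q = 1 \<longleftrightarrow> R = Q"
proof -
  let ?t = "\<lambda>x. pmf R x powr p * pmf Q x powr (1 - p)"
  let ?l = "\<lambda>x. p * pmf R x - (p - 1) * pmf Q x"
  note pointwise = powr_mult_powr_one_minus_ge_linear[OF \<open>1 < p\<close> pmf_nonneg pmf_nonneg supp]
  have sum_l: "(\<Sum>x\<in>UNIV. ?l x) = 1"
  proof -
    have "(\<Sum>x\<in>UNIV. ?l x) = p * (\<Sum>x\<in>UNIV. pmf R x) - (p - 1) * (\<Sum>x\<in>UNIV. pmf Q x)"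
      by (simp only: sum_subtractf sum_distrib_left)
    then show ?thesis by (simp add: sum_pmf_eq_1)
  qed
  have "(\<Sum>x\<in>UNIV. ?l x) \<le> (\<Sum>x\<in>UNIV. ?t x)"
    by (intro sum_mono pointwise(1))
  then show "1 \<le> renyi_sum p R Q"
    by (simp only: sum_l renyi_sum_def)
  have "renyi_sum p R Q = 1 \<longleftrightarrow> (\<Sum>x\<in>UNIV. ?t x - ?l x) = 0"
    unfolding renyi_sum_def by (simp only: sum_subtractf[of ?t ?l] sum_l) linarith
  also have "\<dots> \<longleftrightarrow> (\<forall>x. ?t x = ?l x)"
    using pointwise(1) by (subst sum_nonneg_eq_0_iff) auto
  also have "\<dots> \<longleftrightarrow> R = Q"
    by (simp only: pointwise(2) pmf_eq_iff)
  finally show "renyi_sum p R Q = 1 \<longleftrightarrow> R = Q" .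
qed

definition escort_pmf :: "real \<Rightarrow> 'a::finite pmf \<Rightarrow> 'a pmf" where
  "escort_pmf \<alpha> P = embed_pmf (\<lambda>x. pmf P x powr \<alpha> / (\<Sum>y\<in>UNIV. pmf P y powr \<alpha>))"

text \<open>No sign condition on \<open>\<alpha>\<close> is needed because \<open>0 powr \<alpha> = 0\<close>.\<close>

lemma sum_pmf_powr_pos:
  fixes P :: "'a::finite pmf"
  shows "0 < (\<Sum>x\<in>UNIV. pmf P x powr \<alpha>)"
proof -
  obtain x where "x \<in> set_pmf P"
    using set_pmf_not_empty[of P] by blast
  then have "0 < pmf P x powr \<alpha>"
    by (simp add: set_pmf_iff)
  also have "\<dots> \<le> (\<Sum>x\<in>UNIV. pmf P x powr \<alpha>)"
    by (rule member_le_sum) auto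
  finally show ?thesis .
qed

lemma pmf_escort_pmf:
  "pmf (escort_pmf \<alpha> P) x = pmf P x powr \<alpha> / (\<Sum>y\<in>UNIV. pmf P y powr \<alpha>)"
  unfolding escort_pmf_def
proof (rule pmf_embed_pmf)
  have "(\<Sum>x\<in>UNIV. pmf P x powr \<alpha> / (\<Sum>y\<in>UNIV. pmf P y powr \<alpha>)) = 1"
    using sum_pmf_powr_pos[of P \<alpha>] by (simp add: sum_divide_distrib[symmetric])
  then show "(\<integral>\<^sup>+x. ennreal (pmf P x powr \<alpha> / (\<Sum>y\<in>UNIV. pmf P y powr \<alpha>)) \<partial>count_space UNIV) = 1"
    using sum_pmf_powr_pos[of P \<alpha>]
    by (simp add: nn_integral_count_space_finite sum_ennreal[symmetric])
qed (use sum_pmf_powr_pos[of P \<alpha>] in simp)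

lemma pmf_eq_escort_pmf_powr:
  assumes "p \<noteq> 0"
  shows "pmf P x = (\<Sum>y\<in>UNIV. pmf P y powr (1 / p)) powr p * pmf (escort_pmf (1 / p) P) x powr p"
proof -
  have "pmf (escort_pmf (1 / p) P) x powr p
      = pmf P x / (\<Sum>y\<in>UNIV. pmf P y powr (1 / p)) powr p"
    using assms by (simp add: pmf_escort_pmf powr_divide powr_powr)
  then show ?thesis
    using sum_pmf_powr_pos[of P "1 / p"] by simp
qed

lemma pmf_escort_pmf_pos_iff: "0 < pmf (escort_pmf \<alpha> P) x \<longleftrightarrow> 0 < pmf P x"
  using sum_pmf_powr_pos[of P \<alpha>] by (simp add: pmf_escort_pmf pmf_le_0_iff less_le)

lemma expected_V_eq_infinity:
  fixes P Q :: "'a::finite pmf"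
  assumes "-1 < \<rho>" "0 < pmf P x" "pmf Q x = 0"
  shows "expected_V \<rho> P Q = \<infinity>"
proof -
  have "ennreal (pmf P x) * (if pmf Q x > 0 then ennreal (pmf Q x powr -\<rho>) else \<infinity>) = \<infinity>"
    using assms by simp
  moreover have "ennreal (pmf P x) * (if pmf Q x > 0 then ennreal (pmf Q x powr -\<rho>) else \<infinity>)
      \<le> expected_V \<rho> P Q"
    unfolding expected_V_eq_sum[OF assms(1)] by (rule member_le_sum) auto
  ultimately show ?thesis by (simp add: top_unique)
qed

lemma expected_V_eq_renyi_sum:
  fixes P Q :: "'a::finite pmf"
  assumes "0 < \<rho>" and supp: "\<And>x. 0 < pmf P x \<Longrightarrow> 0 < pmf Q x"
  shows "expected_V \<rho> P Q = ennreal ((\<Sum>y\<in>UNIV. pmf P y powr (1 / (1 + \<rho>))) powr (1 + \<rho>)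
    * renyi_sum (1 + \<rho>) (escort_pmf (1 / (1 + \<rho>)) P) Q)"
proof -
  have "ennreal (pmf P x) * (if pmf Q x > 0 then ennreal (pmf Q x powr -\<rho>) else \<infinity>)
      = ennreal (pmf P x * pmf Q x powr -\<rho>)" for x
    using supp[of x] by (cases "pmf Q x > 0") (auto simp: ennreal_mult pmf_le_0_iff less_le)
  then have "expected_V \<rho> P Q = ennreal (\<Sum>x\<in>UNIV. pmf P x * pmf Q x powr -\<rho>)"
    using \<open>0 < \<rho>\<close> by (simp add: expected_V_eq_sum sum_ennreal)
  also have "(\<lambda>x. pmf P x * pmf Q x powr -\<rho>)
      = (\<lambda>x. (\<Sum>y\<in>UNIV. pmf P y powr (1 / (1 + \<rho>))) powr (1 + \<rho>)
      * (pmf (escort_pmf (1 / (1 + \<rho>)) P) x powr (1 + \<rho>) * pmf Q x powr (1 - (1 + \<rho>))))"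
    using \<open>0 < \<rho>\<close> by (subst pmf_eq_escort_pmf_powr[of "1 + \<rho>"]) (auto simp: fun_eq_iff)
  finally show ?thesis
    by (simp only: sum_distrib_left renyi_sum_def)
qed

lemma expected_V_ge:
  fixes P Q :: "'a::finite pmf"
  assumes "0 < \<rho>"
  shows "ennreal ((\<Sum>y\<in>UNIV. pmf P y powr (1 / (1 + \<rho>))) powr (1 + \<rho>)) \<le> expected_V \<rho> P Q"
proof (cases "\<forall>x. 0 < pmf P x \<longrightarrow> 0 < pmf Q x")
  case True
  have "1 \<le> renyi_sum (1 + \<rho>) (escort_pmf (1 / (1 + \<rho>)) P) Q"
    using True \<open>0 < \<rho>\<close> by (intro renyi_sum_ge_1) (auto simp: pmf_escort_pmf_pos_iff)
  then show ?thesis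
    using True \<open>0 < \<rho>\<close> by (simp add: expected_V_eq_renyi_sum ennreal_leI mult_le_cancel_left1)
next
  case False
  then show ?thesis
    using \<open>0 < \<rho>\<close> expected_V_eq_infinity[of \<rho> P] by (auto simp: pmf_le_0_iff not_less)
qed

lemma expected_V_eq_iff:
  fixes P Q :: "'a::finite pmf"
  assumes "0 < \<rho>"
  shows "expected_V \<rho> P Q = ennreal ((\<Sum>y\<in>UNIV. pmf P y powr (1 / (1 + \<rho>))) powr (1 + \<rho>))
    \<longleftrightarrow> Q = escort_pmf (1 / (1 + \<rho>)) P"
proof (cases "\<forall>x. 0 < pmf P x \<longrightarrow> 0 < pmf Q x")
  case True
  define S where "S = (\<Sum>y\<in>UNIV. pmf P y powr (1 / (1 + \<rho>))) powr (1 + \<rho>)"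
  define D where "D = renyi_sum (1 + \<rho>) (escort_pmf (1 / (1 + \<rho>)) P) Q"
  have "1 \<le> D" and "D = 1 \<longleftrightarrow> Q = escort_pmf (1 / (1 + \<rho>)) P"
    unfolding D_def using True \<open>0 < \<rho>\<close> renyi_sum_ge_1[of "1 + \<rho>" "escort_pmf (1 / (1 + \<rho>)) P" Q]
    by (auto simp: pmf_escort_pmf_pos_iff)
  moreover have "0 < S"
    using sum_pmf_powr_pos[of P "1 / (1 + \<rho>)"] by (simp add: S_def)
  moreover have "expected_V \<rho> P Q = ennreal (S * D)"
    using True \<open>0 < \<rho>\<close> by (simp add: expected_V_eq_renyi_sum S_def D_def)
  ultimately show ?thesis
    by (simp add: ennreal_inj flip: S_def)
next
  case False
  then obtain x where "0 < pmf P x" "pmf Q x = 0"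
    by (auto simp: pmf_le_0_iff not_less)
  then show ?thesis
    using \<open>0 < \<rho>\<close> expected_V_eq_infinity[of \<rho> P x Q] pmf_escort_pmf_pos_iff[of "1 / (1 + \<rho>)" P x]
    by auto
qed

theorem lemma2:
  fixes P :: "'a::finite pmf" and \<rho> :: real
  assumes "\<rho> \<ge> 1"
  shows "opt_expected_V \<rho> P < \<infinity>
    \<and> ln (enn2real (opt_expected_V \<rho> P)) = \<rho> * renyi_entropy (1 / (1 + \<rho>)) P
    \<and> (\<forall>Q :: 'a pmf. expected_V \<rho> P Q = opt_expected_V \<rho> P \<longleftrightarrow>
         (\<forall>x. pmf Q x = pmf P x powr (1 / (1 + \<rho>)) / (\<Sum>x'\<in>UNIV. pmf P x' powr (1 / (1 + \<rho>)))))"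
proof -
  define S where "S = (\<Sum>x\<in>UNIV. pmf P x powr (1 / (1 + \<rho>)))"
  have "0 < \<rho>" using assms by simp
  have opt: "opt_expected_V \<rho> P = ennreal (S powr (1 + \<rho>))"
  proof (rule antisym)
    have "opt_expected_V \<rho> P \<le> expected_V \<rho> P (escort_pmf (1 / (1 + \<rho>)) P)"
      unfolding opt_expected_V_def by (rule INF_lower) simp
    also have "\<dots> = ennreal (S powr (1 + \<rho>))"
      unfolding S_def using expected_V_eq_iff[OF \<open>0 < \<rho>\<close>, of P "escort_pmf (1 / (1 + \<rho>)) P"] by blast
    finally show "opt_expected_V \<rho> P \<le> ennreal (S powr (1 + \<rho>))" .
    show "ennreal (S powr (1 + \<rho>)) \<le> opt_expected_V \<rho> P"
      unfolding opt_expected_V_def S_def by (intro INF_greatest expected_V_ge \<open>0 < \<rho>\<close>)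
  qed
  have "0 < S" unfolding S_def by (rule sum_pmf_powr_pos)
  have "\<rho> * renyi_entropy (1 / (1 + \<rho>)) P = (1 + \<rho>) * ln S"
    using \<open>0 < \<rho>\<close> by (simp add: renyi_entropy_def S_def field_simps)
  moreover have "ln (enn2real (opt_expected_V \<rho> P)) = (1 + \<rho>) * ln S"
    using \<open>0 < S\<close> by (simp add: opt ln_powr)
  moreover have "expected_V \<rho> P Q = opt_expected_V \<rho> P \<longleftrightarrow>
      (\<forall>x. pmf Q x = pmf P x powr (1 / (1 + \<rho>)) / S)" for Q
    unfolding opt S_def using expected_V_eq_iff[OF \<open>0 < \<rho>\<close>, of P Q]
    by (simp add: pmf_eq_iff pmf_escort_pmf)
  ultimately show ?thesis
    by (simp add: opt S_def)
qed

end
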